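(* Let $f \colon \mathbb{R}^n \to \mathbb{R}$ and $g \colon \mathbb{R}^n \to \mathbb{R}^m$ be continuously differentiable, let $X \subseteq \mathbb{R}^m$ be nonempty and closed, let $\rho>0$, and let $p^\rho(y) = \sum_{i=1}^n p_i^\rho(y_i)$ where each $p_i^\rho\colon\mathbb{R}\to\mathbb{R}$ satisfies (P.1)–(P.3) below with unique minimizer $s_i^\rho>0$. Let $x^*$ be a local minimizer of $$\text{(SPO)}\qquad \min_x\ f(x) + \rho\|x\|_0 \quad \text{s.t. } g(x)\in X,$$ and define $y^*\in\mathbb{R}^n$ by $y_i^* = s_i^\rho$ if $x_i^*=0$ and $y_i^*=0$ otherwise (so that $(x^*,y^* )$ is a local minimizer of (SPOref) below). Let $I_0(x^* ) = \{i : x_i^*=0\}$ and let $P \in \mathbb{R}^{|I_0(x^* )|\times n}$ be the matrix whose rows are $e_i^T$, $i\in I_0(x^* )$. Then the following are equivalent: (a) there exists $\alpha^*>0$ such that for every $\alpha\ge\alpha^*$, $x^*$ is a local minimizer of $f(x) + \alpha\|Px\|_1$ over the set $\{x : g(x)\in X\}$ (i.e. $f + \alpha\|P\cdot\|_1$ is an exact penalty function at $x^*$ for the tightened problem $\min f(x)$ s.t. $g(x)\in X$, $x_i = 0$ for all $i \in I_0(x^* )$); (b) there exists $\alpha^*>0$ such that for every $\alpha\ge\alpha^*$, $(x^*,y^* )$ is a local minimizer of $$\text{(Pen}(\alpha))\qquad \min_{x,y}\ f(x) + p^\rho(y) + \alpha |x|^T y \quad\text{s.t. } g(x)\in X,\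 y\ge 0$$ (i.e. Pen$(\alpha)$ is an exact penalty function at $(x^*,y^* )$ for the problem (SPOref): $\min_{x,y} f(x)+p^\rho(y)$ s.t. $g(x)\in X$, $x\circ y = 0$, $y\ge 0$).
   Context: $\|x\|_0$ is the number of nonzero components of $x$; $|x| = (|x_1|,\dots,|x_n|)^T$; $\circ$ is the componentwise product; $e_i$ is the $i$-th unit vector. Conditions on each $p_i^\rho$: (P.1) $p_i^\rho$ is convex and attains a unique minimum at some point $s_i^\rho>0$; (P.2) $p_i^\rho(0) - p_i^\rho(s_i^\rho) = \rho$; (P.3) $p_i^\rho$ is continuously differentiable. *)

theory Defs
  imports "HOL-Analysis.Analysis"
begin

definition C1_map :: "('a::euclidean_space \<Rightarrow> 'b::euclidean_space) \<Rightarrow> bool" where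
  "C1_map F \<longleftrightarrow> (\<exists>F'. (\<forall>x. (F has_derivative blinfun_apply (F' x)) (at x)) \<and> continuous_on UNIV F')"

definition local_minimizer :: "('a::metric_space \<Rightarrow> real) \<Rightarrow> 'a set \<Rightarrow> 'a \<Rightarrow> bool" where
  "local_minimizer F S x \<longleftrightarrow> x \<in> S \<and> (\<exists>e>0. \<forall>z\<in>S. dist z x < e \<longrightarrow> F x \<le> F z)"

definition l0norm :: "real^'n \<Rightarrow> nat" where
  "l0norm x = card {i. x $ i \<noteq> 0}"

definition I0 :: "real^'n \<Rightarrow> 'n set" where
  "I0 x = {i. x $ i = 0}"

text \<open>||P x||_1 where P has rows e_i^T for i in I_0(x0).\<close>
definition P_l1 :: "real^'n \<Rightarrow> real^'n \<Rightarrow> real" where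
  "P_l1 x0 x = (\<Sum>i\<in>I0 x0. \<bar>x $ i\<bar>)"

text \<open>Conditions (P.1)-(P.3) on a scalar function q with minimizer s and parameter rho.\<close>
definition penalty_conds :: "real \<Rightarrow> (real \<Rightarrow> real) \<Rightarrow> real \<Rightarrow> bool" where
  "penalty_conds \<rho> q s \<longleftrightarrow>
     convex_on UNIV q \<and> s > 0 \<and> (\<forall>t. q s \<le> q t) \<and> (\<forall>t. q t = q s \<longrightarrow> t = s) \<and>
     q 0 - q s = \<rho> \<and>
     (\<exists>q'. (\<forall>t. (q has_real_derivative q' t) (at t)) \<and> continuous_on UNIV q')"

end

theory Submission
  imports Defs
begin

text \<open>Near \<open>(x\<^sup>*, y\<^sup>*)\<close> a coordinate with \<open>x\<^sup>*\<^sub>i = 0\<close> has \<open>y\<^sub>i\<close> bounded away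
  from 0, so for large \<open>\<alpha>\<close> the coupling term \<open>\<alpha> \<bar>x\<^sub>i\<bar> y\<^sub>i\<close> dominates \<open>\<alpha>\<^sub>0 \<bar>x\<^sub>i\<bar>\<close>
  while \<open>p\<^sub>i(y\<^sub>i) \<ge> p\<^sub>i(s\<^sub>i)\<close>; a coordinate with \<open>x\<^sup>*\<^sub>i \<noteq> 0\<close> has \<open>\<bar>x\<^sub>i\<bar>\<close> bounded away
  from 0, so the coupling term dominates the linear lower bound of the convex \<open>p\<^sub>i\<close> at 0.
  Conversely, freezing \<open>y = y\<^sup>*\<close> turns the coupling term into a weighted \<open>\<ell>\<^sub>1\<close> penalty
  on the coordinates in \<open>I\<^sub>0(x\<^sup>*)\<close>, with weights \<open>s\<^sub>i\<close>.\<close>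

lemma local_minimizer_iff_eventually:
  "local_minimizer F S x0 \<longleftrightarrow> x0 \<in> S \<and> (\<forall>\<^sub>F x in nhds x0. x \<in> S \<longrightarrow> F x0 \<le> F x)"
  unfolding local_minimizer_def eventually_nhds_metric by blast

lemma local_minimizer_increment_le:
  assumes "local_minimizer \<Phi> S x0"
    and "\<forall>\<^sub>F x in nhds x0. x \<in> S \<longrightarrow> \<Phi> x - \<Phi> x0 \<le> \<Psi> x - \<Psi> x0"
  shows "local_minimizer \<Psi> S x0"
  using assms unfolding local_minimizer_iff_eventually
  by (auto elim: eventually_elim2)

lemma local_minimizer_cylinder:
  assumes "local_minimizer F S x0" and "P y0"
  shows "local_minimizer (\<lambda>(x, y). F x) {(x, y). x \<in> S \<and> P y} (x0, y0)"
proof -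
  have "filterlim fst (nhds x0) (nhds (x0, y0))"
    using tendsto_fst[OF filterlim_ident, of "(x0, y0)"] by simp
  then have "\<forall>\<^sub>F z in nhds (x0, y0). fst z \<in> S \<longrightarrow> F x0 \<le> F (fst z)"
    using assms(1) eventually_compose_filterlim[of "\<lambda>x. x \<in> S \<longrightarrow> F x0 \<le> F x"]
    unfolding local_minimizer_iff_eventually by blast
  then have "\<forall>\<^sub>F z in nhds (x0, y0).
      z \<in> {(x, y). x \<in> S \<and> P y} \<longrightarrow> (\<lambda>(x, y). F x) (x0, y0) \<le> (\<lambda>(x, y). F x) z"
    by (rule eventually_mono) auto
  with assms show ?thesis
    unfolding local_minimizer_iff_eventually by simp
qed

lemma local_minimizer_slice:
  assumes "local_minimizer F {(x, y). x \<in> S \<and> P y} (x0, y0)"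
  shows "local_minimizer (\<lambda>x. F (x, y0)) S x0"
proof -
  have "filterlim (\<lambda>x. (x, y0)) (nhds (x0, y0)) (nhds x0)"
    by (intro tendsto_intros filterlim_ident)
  then show ?thesis
    using assms unfolding local_minimizer_iff_eventually
    by (auto dest: eventually_compose_filterlim)
qed

lemma eventually_at_top_imp_ex_pos_real:
  assumes "\<forall>\<^sub>F \<alpha> in at_top. P (\<alpha>::real)"
  shows "\<exists>\<alpha>0>0. \<forall>\<alpha>\<ge>\<alpha>0. P \<alpha>"
proof -
  obtain N where "\<forall>\<alpha>\<ge>N. P \<alpha>"
    using assms unfolding eventually_at_top_linorder by blast
  then show ?thesis
    by (intro exI[of _ "max N 1"]) auto
qed

lemma P_l1_eq_sum: "P_l1 x0 x = (\<Sum>i\<in>UNIV. if x0 $ i = 0 then \<bar>x $ i\<bar> else 0)"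
  unfolding P_l1_def I0_def by (simp add: sum.If_cases)

lemma P_l1_self [simp]: "P_l1 x0 x0 = 0"
  unfolding P_l1_def I0_def by simp

lemma penalty_conds_above_tangent_at_0:
  assumes "penalty_conds \<rho> q s"
  shows "\<exists>D. \<forall>t. q 0 + D * t \<le> q t"
proof -
  obtain q' where "\<And>t. (q has_real_derivative q' t) (at t)" and "convex_on UNIV q"
    using assms unfolding penalty_conds_def by blast
  then have "q t - q 0 \<ge> q' 0 * (t - 0)" for t
    by (intro convex_on_imp_above_tangent) auto
  then show ?thesis
    by (intro exI[of _ "q' 0"]) (simp add: algebra_simps)
qed

lemma eventually_complementarity_dominates_abs:
  fixes q :: "real \<Rightarrow> real"
  assumes "0 < s" and "\<And>t. q s \<le> q t"
  shows "\<forall>\<^sub>F \<alpha> in at_top. \<forall>\<^sub>F (x, y) in nhds (x0, s). a * \<bar>x\<bar> \<le> q y - q s + \<alpha> * (\<bar>x\<bar> * y)"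
proof -
  have near: "\<forall>\<^sub>F (x, y) in nhds (x0, s). s / 2 < y"
    unfolding case_prod_unfold using assms(1)
    by (intro order_tendstoD(1)[OF tendsto_snd[OF filterlim_ident]]) simp
  have "\<forall>\<^sub>F \<alpha> in at_top. 2 * \<bar>a\<bar> / s \<le> \<alpha>"
    by simp
  then show ?thesis
  proof (rule eventually_mono)
    fix \<alpha> assume "2 * \<bar>a\<bar> / s \<le> \<alpha>"
    then have a_le: "\<bar>a\<bar> \<le> \<alpha> * (s / 2)"
      using assms(1) by (simp add: pos_divide_le_eq)
    then have "0 \<le> \<alpha>"
      using assms(1) abs_ge_zero[of a] mult_neg_pos[of \<alpha> "s / 2"] by fastforce
    have "a * \<bar>x\<bar> \<le> q y - q s + \<alpha> * (\<bar>x\<bar> * y)" if "s / 2 < y" for x y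
    proof -
      have "a * \<bar>x\<bar> \<le> \<bar>a\<bar> * \<bar>x\<bar>"
        by (simp add: mult_right_mono)
      also have "\<dots> \<le> \<alpha> * y * \<bar>x\<bar>"
        using a_le mult_left_mono[OF less_imp_le[OF that] \<open>0 \<le> \<alpha>\<close>]
        by (intro mult_right_mono) auto
      finally show ?thesis
        using assms(2)[of y] by (simp add: algebra_simps)
    qed
    with near show "\<forall>\<^sub>F (x, y) in nhds (x0, s). a * \<bar>x\<bar> \<le> q y - q s + \<alpha> * (\<bar>x\<bar> * y)"
      by (auto elim: eventually_mono)
  qed
qed

lemma eventually_complementarity_nonneg:
  fixes q :: "real \<Rightarrow> real"
  assumes "x0 \<noteq> 0" and "\<And>t. q 0 + D * t \<le> q t"
  shows "\<forall>\<^sub>F \<alpha> in at_top. \<forall>\<^sub>F (x, y) in nhds (x0, 0). 0 \<le> y \<longrightarrow> 0 \<le> q y - q 0 + \<alpha> * (\<bar>x\<bar> * y)"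
proof -
  have near: "\<forall>\<^sub>F (x, y) in nhds (x0, 0). \<bar>x0\<bar> / 2 < \<bar>x\<bar>"
    unfolding case_prod_unfold using assms(1)
    by (intro order_tendstoD(1)[OF tendsto_rabs[OF tendsto_fst[OF filterlim_ident]]]) simp
  have "\<forall>\<^sub>F \<alpha> in at_top. 2 * \<bar>D\<bar> / \<bar>x0\<bar> \<le> \<alpha>"
    by simp
  then show ?thesis
  proof (rule eventually_mono)
    fix \<alpha> assume "2 * \<bar>D\<bar> / \<bar>x0\<bar> \<le> \<alpha>"
    then have D_le: "\<bar>D\<bar> \<le> \<alpha> * (\<bar>x0\<bar> / 2)"
      using assms(1) by (simp add: pos_divide_le_eq)
    then have "0 \<le> \<alpha>"
      using assms(1) abs_ge_zero[of D] mult_neg_pos[of \<alpha> "\<bar>x0\<bar> / 2"] by fastforce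
    have "0 \<le> q y - q 0 + \<alpha> * (\<bar>x\<bar> * y)" if "\<bar>x0\<bar> / 2 < \<bar>x\<bar>" and "0 \<le> y" for x y
    proof -
      have "- (D * y) \<le> \<bar>D\<bar> * y"
        using \<open>0 \<le> y\<close> by (metis abs_ge_minus_self mult_minus_left mult_right_mono)
      also have "\<dots> \<le> \<alpha> * \<bar>x\<bar> * y"
        using D_le mult_left_mono[OF less_imp_le[OF that(1)] \<open>0 \<le> \<alpha>\<close>] \<open>0 \<le> y\<close>
        by (intro mult_right_mono) auto
      finally show ?thesis
        using assms(2)[of y] by (simp add: algebra_simps)
    qed
    with near show "\<forall>\<^sub>F (x, y) in nhds (x0, 0). 0 \<le> y \<longrightarrow> 0 \<le> q y - q 0 + \<alpha> * (\<bar>x\<bar> * y)"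
      by (auto elim: eventually_mono)
  qed
qed

lemma eventually_penalty_coordinate:
  fixes q :: "real \<Rightarrow> real"
  assumes "penalty_conds \<rho> q s"
  shows "\<forall>\<^sub>F \<alpha> in at_top. \<forall>\<^sub>F (x, y) in nhds (x0, if x0 = 0 then s else 0).
           0 \<le> y \<longrightarrow>
           (if x0 = 0 then a * \<bar>x\<bar> else 0) \<le> q y - q (if x0 = 0 then s else 0) + \<alpha> * (\<bar>x\<bar> * y)"
proof (cases "x0 = 0")
  case True
  have "\<forall>\<^sub>F \<alpha> in at_top. \<forall>\<^sub>F (x, y) in nhds (x0, s). a * \<bar>x\<bar> \<le> q y - q s + \<alpha> * (\<bar>x\<bar> * y)"
    using assms unfolding penalty_conds_def by (intro eventually_complementarity_dominates_abs) auto
  then show ?thesis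
  proof (rule eventually_mono)
    fix \<alpha>
    assume "\<forall>\<^sub>F (x, y) in nhds (x0, s). a * \<bar>x\<bar> \<le> q y - q s + \<alpha> * (\<bar>x\<bar> * y)"
    then show "\<forall>\<^sub>F (x, y) in nhds (x0, if x0 = 0 then s else 0). 0 \<le> y \<longrightarrow>
        (if x0 = 0 then a * \<bar>x\<bar> else 0) \<le> q y - q (if x0 = 0 then s else 0) + \<alpha> * (\<bar>x\<bar> * y)"
      using True by (simp add: case_prod_unfold eventually_mono)
  qed
next
  case False
  obtain D where "\<And>t. q 0 + D * t \<le> q t"
    using penalty_conds_above_tangent_at_0[OF assms] by blast
  from eventually_complementarity_nonneg[OF False this] False show ?thesis
    by simp
qed

lemma eventually_nhds_vec_pair_coordinatewise:
  fixes xs :: "'a::topological_space ^ 'n" and ys :: "'b::topological_space ^ 'n"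
  assumes "\<forall>i. eventually (P i) (nhds (xs $ i, ys $ i))"
  shows "\<forall>\<^sub>F z in nhds (xs, ys). \<forall>i. P i (fst z $ i, snd z $ i)"
proof (intro eventually_all_finite)
  fix i
  have "filterlim (\<lambda>z. (fst z $ i, snd z $ i)) (nhds (xs $ i, ys $ i)) (nhds (xs, ys))"
    using tendsto_fst[OF filterlim_ident] tendsto_snd[OF filterlim_ident]
    by (intro tendsto_intros) auto
  then show "\<forall>\<^sub>F z in nhds (xs, ys). P i (fst z $ i, snd z $ i)"
    by (rule eventually_compose_filterlim[OF assms[rule_format]])
qed

lemma P_l1_le_complementarity_increment:
  fixes x0 x y y0 :: "real^'n" and q :: "'n \<Rightarrow> real \<Rightarrow> real"
  assumes "\<And>i. (if x0 $ i = 0 then a * \<bar>x $ i\<bar> else 0)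
                 \<le> q i (y $ i) - q i (y0 $ i) + \<alpha> * (\<bar>x $ i\<bar> * y $ i)"
  shows "a * P_l1 x0 x
           \<le> (\<Sum>i\<in>UNIV. q i (y $ i)) - (\<Sum>i\<in>UNIV. q i (y0 $ i)) + \<alpha> * (\<Sum>i\<in>UNIV. \<bar>x $ i\<bar> * y $ i)"
proof -
  have "a * P_l1 x0 x = (\<Sum>i\<in>UNIV. if x0 $ i = 0 then a * \<bar>x $ i\<bar> else 0)"
    unfolding P_l1_eq_sum sum_distrib_left by (rule sum.cong) auto
  also have "\<dots> \<le> (\<Sum>i\<in>UNIV. q i (y $ i) - q i (y0 $ i) + \<alpha> * (\<bar>x $ i\<bar> * y $ i))"
    by (intro sum_mono assms)
  also have "\<dots> = (\<Sum>i\<in>UNIV. q i (y $ i)) - (\<Sum>i\<in>UNIV. q i (y0 $ i)) + \<alpha> * (\<Sum>i\<in>UNIV. \<bar>x $ i\<bar> * y $ i)"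
    by (simp add: sum.distrib sum_subtractf sum_distrib_left)
  finally show ?thesis .
qed

lemma exact_l1_penalty_imp_exact_complementarity_penalty:
  fixes f :: "real^'n \<Rightarrow> real" and p :: "'n \<Rightarrow> real \<Rightarrow> real"
  assumes p_conds: "\<And>i. penalty_conds \<rho> (p i) (s i)"
    and l1_min: "local_minimizer (\<lambda>x. f x + a * P_l1 xs x) S xs"
  shows "\<forall>\<^sub>F \<alpha> in at_top. local_minimizer
           (\<lambda>(x, y). f x + (\<Sum>i\<in>UNIV. p i (y $ i)) + \<alpha> * (\<Sum>i\<in>UNIV. \<bar>x $ i\<bar> * y $ i))
           {(x, y). x \<in> S \<and> (\<forall>i. 0 \<le> y $ i)} (xs, \<chi> i. if xs $ i = 0 then s i else 0)"
proof -
  define ys :: "real^'n" where "ys = (\<chi> i. if xs $ i = 0 then s i else 0)"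
  define pen where "pen \<alpha> = (\<lambda>(x, y). f x + (\<Sum>i\<in>UNIV. p i (y $ i)) + \<alpha> * (\<Sum>i\<in>UNIV. \<bar>x $ i\<bar> * y $ i))"
    for \<alpha>
  define feasible :: "((real^'n) \<times> (real^'n)) set" where "feasible = {(x, y). x \<in> S \<and> (\<forall>i. 0 \<le> y $ i)}"
  have complementary: "(\<Sum>i\<in>UNIV. \<bar>xs $ i\<bar> * ys $ i) = 0"
    by (rule sum.neutral) (simp add: ys_def)
  have "\<forall>i. 0 \<le> ys $ i"
    using p_conds by (auto simp: ys_def penalty_conds_def less_imp_le)
  with l1_min have lifted_min: "local_minimizer (\<lambda>(x, y). f x + a * P_l1 xs x) feasible (xs, ys)"
    unfolding feasible_def by (rule local_minimizer_cylinder)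
  define coordinate_bound where "coordinate_bound \<alpha> i = (\<lambda>(x, y). 0 \<le> y \<longrightarrow>
      (if xs $ i = 0 then a * \<bar>x\<bar> else 0) \<le> p i y - p i (ys $ i) + \<alpha> * (\<bar>x\<bar> * y))" for \<alpha> i
  have "\<forall>\<^sub>F \<alpha> in at_top. \<forall>i. eventually (coordinate_bound \<alpha> i) (nhds (xs $ i, ys $ i))"
    unfolding coordinate_bound_def ys_def vec_lambda_beta
    by (intro eventually_all_finite eventually_penalty_coordinate[OF p_conds])
  then have "\<forall>\<^sub>F \<alpha> in at_top. \<forall>\<^sub>F z in nhds (xs, ys). \<forall>i. coordinate_bound \<alpha> i (fst z $ i, snd z $ i)"
    by (elim eventually_mono) (rule eventually_nhds_vec_pair_coordinatewise)
  then have "\<forall>\<^sub>F \<alpha> in at_top. local_minimizer (pen \<alpha>) feasible (xs, ys)"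
  proof (rule eventually_mono)
    fix \<alpha>
    assume near: "\<forall>\<^sub>F z in nhds (xs, ys). \<forall>i. coordinate_bound \<alpha> i (fst z $ i, snd z $ i)"
    have increment_le: "(\<lambda>(x, y). f x + a * P_l1 xs x) z - (\<lambda>(x, y). f x + a * P_l1 xs x) (xs, ys)
        \<le> pen \<alpha> z - pen \<alpha> (xs, ys)"
      if "\<forall>i. coordinate_bound \<alpha> i (fst z $ i, snd z $ i)" and "z \<in> feasible" for z
    proof -
      obtain x y where z: "z = (x, y)"
        by fastforce
      have "a * P_l1 xs x
          \<le> (\<Sum>i\<in>UNIV. p i (y $ i)) - (\<Sum>i\<in>UNIV. p i (ys $ i)) + \<alpha> * (\<Sum>i\<in>UNIV. \<bar>x $ i\<bar> * y $ i)"
        using that unfolding z feasible_def coordinate_bound_def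
        by (intro P_l1_le_complementarity_increment) auto
      then show ?thesis
        by (simp add: z pen_def complementary)
    qed
    from near have "\<forall>\<^sub>F z in nhds (xs, ys). z \<in> feasible \<longrightarrow>
        (\<lambda>(x, y). f x + a * P_l1 xs x) z - (\<lambda>(x, y). f x + a * P_l1 xs x) (xs, ys)
          \<le> pen \<alpha> z - pen \<alpha> (xs, ys)"
      by (elim eventually_mono) (blast intro: increment_le)
    then show "local_minimizer (pen \<alpha>) feasible (xs, ys)"
      by (rule local_minimizer_increment_le[OF lifted_min])
  qed
  then show ?thesis
    unfolding pen_def feasible_def ys_def .
qed

lemma exact_complementarity_penalty_imp_exact_l1_penalty:
  fixes f :: "real^'n \<Rightarrow> real" and p :: "'n \<Rightarrow> real \<Rightarrow> real"
  assumes pen_min: "local_minimizer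
      (\<lambda>(x, y). f x + (\<Sum>i\<in>UNIV. p i (y $ i)) + a * (\<Sum>i\<in>UNIV. \<bar>x $ i\<bar> * y $ i))
      {(x, y). x \<in> S \<and> (\<forall>i. 0 \<le> y $ i)} (xs, \<chi> i. if xs $ i = 0 then s i else 0)"
  shows "\<forall>\<^sub>F \<alpha> in at_top. local_minimizer (\<lambda>x. f x + \<alpha> * P_l1 xs x) S xs"
proof -
  define ys :: "real^'n" where "ys = (\<chi> i. if xs $ i = 0 then s i else 0)"
  have complementary: "(\<Sum>i\<in>UNIV. \<bar>xs $ i\<bar> * ys $ i) = 0"
    by (rule sum.neutral) (simp add: ys_def)
  have slice_min: "local_minimizer
      (\<lambda>x. f x + (\<Sum>i\<in>UNIV. p i (ys $ i)) + a * (\<Sum>i\<in>UNIV. \<bar>x $ i\<bar> * ys $ i)) S xs"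
    using local_minimizer_slice[OF pen_min[folded ys_def]] by simp
  have "\<forall>\<^sub>F \<alpha> in at_top. \<forall>i. a * s i \<le> \<alpha>"
    by (intro eventually_all_finite) simp
  then show ?thesis
  proof (rule eventually_mono)
    fix \<alpha> assume weights_le: "\<forall>i. a * s i \<le> \<alpha>"
    have "a * (\<Sum>i\<in>UNIV. \<bar>x $ i\<bar> * ys $ i) \<le> \<alpha> * P_l1 xs x" for x
    proof -
      have "a * (\<Sum>i\<in>UNIV. \<bar>x $ i\<bar> * ys $ i) = (\<Sum>i\<in>UNIV. if xs $ i = 0 then a * s i * \<bar>x $ i\<bar> else 0)"
        unfolding sum_distrib_left by (rule sum.cong) (auto simp: ys_def)
      also have "\<dots> \<le> (\<Sum>i\<in>UNIV. if xs $ i = 0 then \<alpha> * \<bar>x $ i\<bar> else 0)"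
        using weights_le by (intro sum_mono) (simp add: mult_right_mono)
      also have "\<dots> = \<alpha> * P_l1 xs x"
        unfolding P_l1_eq_sum sum_distrib_left by (rule sum.cong) auto
      finally show ?thesis .
    qed
    then show "local_minimizer (\<lambda>x. f x + \<alpha> * P_l1 xs x) S xs"
      by (intro local_minimizer_increment_le[OF slice_min] always_eventually) (simp add: complementary)
  qed
qed

theorem mainTheorem2:
  fixes f :: "real^'n \<Rightarrow> real" and g :: "real^'n \<Rightarrow> real^'m"
    and X :: "(real^'m) set" and \<rho> :: real
    and p :: "'n \<Rightarrow> real \<Rightarrow> real" and s :: "'n \<Rightarrow> real"
    and xs :: "real^'n"
  assumes f_C1: "C1_map f" and g_C1: "C1_map g"
    and X_ne: "X \<noteq> {}" and X_closed: "closed X"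
    and rho_pos: "\<rho> > 0"
    and p_conds: "\<And>i. penalty_conds \<rho> (p i) (s i)"
    and xs_loc: "local_minimizer (\<lambda>x. f x + \<rho> * real (l0norm x)) {x. g x \<in> X} xs"
  shows "(\<exists>\<alpha>0>0. \<forall>\<alpha>\<ge>\<alpha>0.
            local_minimizer (\<lambda>x. f x + \<alpha> * P_l1 xs x) {x. g x \<in> X} xs)
     \<longleftrightarrow>
         (\<exists>\<alpha>0>0. \<forall>\<alpha>\<ge>\<alpha>0.
            local_minimizer
              (\<lambda>(x, y). f x + (\<Sum>i\<in>UNIV. p i (y $ i)) + \<alpha> * (\<Sum>i\<in>UNIV. \<bar>x $ i\<bar> * y $ i))
              {(x, y). g x \<in> X \<and> (\<forall>i. y $ i \<ge> 0)}
              (xs, \<chi> i. if xs $ i = 0 then s i else 0))"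
  (is "?l1_exact \<longleftrightarrow> ?pen_exact")
proof -
  have feasible_eq: "{(x, y). x \<in> {x. g x \<in> X} \<and> (\<forall>i. 0 \<le> y $ i)} = {(x, y). g x \<in> X \<and> (\<forall>i. 0 \<le> y $ i)}"
    by simp
  show ?thesis
  proof
    assume ?l1_exact
    then obtain a where "local_minimizer (\<lambda>x. f x + a * P_l1 xs x) {x. g x \<in> X} xs"
      by (meson order_refl)
    from exact_l1_penalty_imp_exact_complementarity_penalty[OF p_conds this]
    show ?pen_exact
      unfolding feasible_eq by (rule eventually_at_top_imp_ex_pos_real)
  next
    assume ?pen_exact
    then obtain a where "local_minimizer
        (\<lambda>(x, y). f x + (\<Sum>i\<in>UNIV. p i (y $ i)) + a * (\<Sum>i\<in>UNIV. \<bar>x $ i\<bar> * y $ i))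
        {(x, y). g x \<in> X \<and> (\<forall>i. 0 \<le> y $ i)} (xs, \<chi> i. if xs $ i = 0 then s i else 0)"
      by (meson order_refl)
    from exact_complementarity_penalty_imp_exact_l1_penalty[OF this[folded feasible_eq]]
    show ?l1_exact
      by (rule eventually_at_top_imp_ex_pos_real)
  qed
qed

end
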